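(* Let $n\ge2$, $m_1,\dots,m_n\ge1$, $X_i=\{0,\dots,m_i-1\}$, and let $T$ be the rooted tree whose level-$i$ vertices ($0\le i\le n$) are the words $x_1\cdots x_i$ with $x_j\in X_j$, the parent of $x_1\cdots x_i$ being $x_1\cdots x_{i-1}$; identify its last level $L_n$ with $X_1\times\cdots\times X_n$. Let $\bar p(x,y)$ ($x,y\in L_n$) be the insect transition probability, and $\alpha_1,\dots,\alpha_n$ as in the context. Set $p^0_i=\alpha_1\alpha_2\cdots\alpha_{n-i}(1-\alpha_{n-i+1})$ for $i=1,\dots,n-1$ and $p^0_n=1-\alpha_1$, and let $P$ be the nested product $$P=\sum_{i=1}^np^0_i\,(I_1\otimes\cdots\otimes I_{i-1}\otimes J_i\otimes J_{i+1}\otimes\cdots\otimes J_n),$$ i.e. $p(x,y)=\sum_{i=1}^np^0_i\big(\prod_{j<i}\delta(x_j,y_j)\big)\frac{1}{m_im_{i+1}\cdots m_n}$. Then $p(x,y)=\bar p(x,y)$ for all $x,y\in L_n$.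
   Context: Simple random walk on $T$: from each vertex move to a uniformly chosen neighbour (neighbours are parent and children). For $x,y\in L_n$, $\bar p(x,y)$ is the probability that the simple random walk started at $x$ is at $y$ at the first time $t\ge1$ at which it lies in $L_n$. Let $x_0=(0,\dots,0)\in L_n$ and for $0\le j\le n$ let $\xi_j$ be the ancestor of $x_0$ at level $n-j$ (so $\xi_0=x_0$, $\xi_n$ the root). For $1\le j\le n-1$, $\alpha_j$ is the probability that the simple random walk started at $\xi_j$ visits $\xi_{j+1}$ before visiting $L_n$; set $\alpha_n=0$. $I_i$ is the identity and $J_i$ the $m_i\times m_i$ matrix with all entries $1/m_i$; $\delta(a,b)=1$ if $a=b$ and $0$ otherwise. *)

theory Defs
  imports Complex_Main
begin

text \<open>Vertices of the tree T are words (lists) x_1...x_i with i \<le> n and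
  x_j \<in> {0..<m j}; coordinate x_j is stored at list position j-1.
  The root is the empty word; the parent of a nonempty word is its butlast.\<close>

definition tree_vertex :: "(nat \<Rightarrow> nat) \<Rightarrow> nat \<Rightarrow> nat list \<Rightarrow> bool" where
  "tree_vertex m n v \<longleftrightarrow> length v \<le> n \<and> (\<forall>j<length v. v ! j < m (Suc j))"

definition leaf :: "(nat \<Rightarrow> nat) \<Rightarrow> nat \<Rightarrow> nat list \<Rightarrow> bool" where
  "leaf m n v \<longleftrightarrow> tree_vertex m n v \<and> length v = n"

definition nbrs :: "(nat \<Rightarrow> nat) \<Rightarrow> nat \<Rightarrow> nat list \<Rightarrow> nat list set" where
  "nbrs m n v =
     (if v = [] then {} else {butlast v}) \<union>
     (if length v < n then {v @ [c] | c. c < m (Suc (length v))} else {})"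

definition srw :: "(nat \<Rightarrow> nat) \<Rightarrow> nat \<Rightarrow> nat list \<Rightarrow> nat list \<Rightarrow> real" where
  "srw m n v w = (if w \<in> nbrs m n v then 1 / real (card (nbrs m n v)) else 0)"

fun path_prob :: "(nat \<Rightarrow> nat) \<Rightarrow> nat \<Rightarrow> nat list list \<Rightarrow> real" where
  "path_prob m n (a # b # rest) = srw m n a b * path_prob m n (b # rest)"
| "path_prob m n _ = 1"

definition hit_paths ::
  "(nat \<Rightarrow> nat) \<Rightarrow> nat \<Rightarrow> nat list set \<Rightarrow> nat list \<Rightarrow> nat list \<Rightarrow> nat \<Rightarrow> nat list list set" where
  "hit_paths m n A x y t =
     {vs. length vs = Suc t \<and> hd vs = x \<and> last vs = y \<and>
          (\<forall>i<length vs. tree_vertex m n (vs ! i)) \<and>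
          (\<forall>i. 0 < i \<and> i < t \<longrightarrow> vs ! i \<notin> A)}"

text \<open>Probability that SRW from x, at the first time t \<ge> 1 it lies in A \<union> {y},
  is at y (i.e. it hits y at time t \<ge> 1 having avoided A at times 1..t-1).\<close>
definition first_hit_prob ::
  "(nat \<Rightarrow> nat) \<Rightarrow> nat \<Rightarrow> nat list set \<Rightarrow> nat list \<Rightarrow> nat list \<Rightarrow> real" where
  "first_hit_prob m n A x y = (\<Sum>t. \<Sum>vs\<in>hit_paths m n A x y (Suc t). path_prob m n vs)"

definition pbar :: "(nat \<Rightarrow> nat) \<Rightarrow> nat \<Rightarrow> nat list \<Rightarrow> nat list \<Rightarrow> real" where
  "pbar m n x y = first_hit_prob m n {v. leaf m n v} x y"

definition xi :: "nat \<Rightarrow> nat \<Rightarrow> nat list" where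
  "xi n j = replicate (n - j) 0"

text \<open>alpha j (1 \<le> j \<le> n-1): probability that SRW from xi j visits xi (j+1)
  before visiting L_n; alpha n = 0.\<close>
definition alpha :: "(nat \<Rightarrow> nat) \<Rightarrow> nat \<Rightarrow> nat \<Rightarrow> real" where
  "alpha m n j = (if j = n then 0 else
     first_hit_prob m n ({v. leaf m n v} \<union> {xi n (Suc j)}) (xi n j) (xi n (Suc j)))"

definition p0 :: "(nat \<Rightarrow> nat) \<Rightarrow> nat \<Rightarrow> nat \<Rightarrow> real" where
  "p0 m n i = (if i = n then 1 - alpha m n 1
               else (\<Prod>k=1..n-i. alpha m n k) * (1 - alpha m n (n - i + 1)))"

definition pnest :: "(nat \<Rightarrow> nat) \<Rightarrow> nat \<Rightarrow> nat list \<Rightarrow> nat list \<Rightarrow> real" where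
  "pnest m n x y = (\<Sum>i=1..n. p0 m n i *
      (\<Prod>j\<in>{1..<i}. if x ! (j - 1) = y ! (j - 1) then 1 else 0) /
      (\<Prod>j=i..n. real (m j)))"

end

theory Submission
  imports Defs
begin

text \<open>The walk started at a leaf x first steps to its parent x', so pbar x y is the probability
  that the walk from the inner vertex x' first enters L_n at y. As a function of the starting
  vertex such a hitting probability is harmonic at the inner vertices, with indicator boundary
  values, and on the finite tree a maximum principle makes it the only such function. It therefore
  suffices to exhibit harmonic candidates. Let a_K be the probability that the walk from height K
  reaches its parent before L_n; first-step analysis gives a recursion for a_K, and the same
  uniqueness argument shows alpha_j = a_j. From an inner vertex v the walk climbs exactly to its
  ancestor at level r with probability a_(n-|v|) ... a_(n-r-1) (1 - a_(n-r)), and then lands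
  uniformly on one of the m_(r+1) ... m_n leaves below it; the resulting sum over r is harmonic,
  and at v = x' it is the nested product p(x, y).\<close>

lemma finite_tree_vertices: "finite {v. tree_vertex m n v}"
proof -
  have "{v. tree_vertex m n v} \<subseteq> {xs. set xs \<subseteq> {..<\<Sum>i\<le>n. m i} \<and> length xs \<le> n}"
  proof (clarsimp simp: tree_vertex_def)
    fix v c assume v: "length v \<le> n" "\<forall>j<length v. v ! j < m (Suc j)" and "c \<in> set v"
    then obtain j where j: "j < length v" "c = v ! j" by (auto simp: in_set_conv_nth)
    have "m (Suc j) \<le> (\<Sum>i\<le>n. m i)"
      by (rule member_le_sum) (use j v in auto)
    with v j show "c < (\<Sum>i\<le>n. m i)" by fastforce
  qed
  then show ?thesis
    by (rule finite_subset) (simp add: finite_lists_length_le)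
qed

lemma nbrs_nonroot:
  "v \<noteq> [] \<Longrightarrow> length v < n \<Longrightarrow>
    nbrs m n v = insert (butlast v) ((\<lambda>c. v @ [c]) ` {..<m (Suc (length v))})"
  by (auto simp: nbrs_def)

lemma nbrs_root: "0 < n \<Longrightarrow> nbrs m n [] = (\<lambda>c. [c]) ` {..<m (Suc 0)}"
  by (auto simp: nbrs_def)

lemma nbrs_leaf: "leaf m n v \<Longrightarrow> v \<noteq> [] \<Longrightarrow> nbrs m n v = {butlast v}"
  by (auto simp: nbrs_def leaf_def)

lemma finite_nbrs: "finite (nbrs m n v)"
  by (cases "v = []") (auto simp: nbrs_def setcompr_eq_image)

lemma tree_vertex_nbrs: "tree_vertex m n v \<Longrightarrow> z \<in> nbrs m n v \<Longrightarrow> tree_vertex m n z"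
  by (auto simp: nbrs_def tree_vertex_def nth_append nth_butlast less_Suc_eq split: if_splits)

lemma butlast_not_in_children: "butlast v \<notin> (\<lambda>c. v @ [c]) ` C"
  by (auto dest: arg_cong[of _ _ length])

lemma card_nbrs_nonroot:
  "v \<noteq> [] \<Longrightarrow> length v < n \<Longrightarrow> card (nbrs m n v) = Suc (m (Suc (length v)))"
  by (simp add: nbrs_nonroot butlast_not_in_children card_image inj_on_def)

lemma card_nbrs_root: "0 < n \<Longrightarrow> card (nbrs m n []) = m (Suc 0)"
  by (simp add: nbrs_root card_image inj_on_def)

lemma sum_nbrs_srw: "(\<Sum>z\<in>nbrs m n v. srw m n v z * h z) = (\<Sum>z\<in>nbrs m n v. h z) / card (nbrs m n v)"
  by (simp add: srw_def sum_divide_distrib)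

section \<open>First-step analysis of first-hit probabilities\<close>

lemma finite_hit_paths: "finite (hit_paths m n A x y t)"
proof -
  have "hit_paths m n A x y t \<subseteq> {vs. set vs \<subseteq> {v. tree_vertex m n v} \<and> length vs = Suc t}"
    by (auto simp: hit_paths_def in_set_conv_nth)
  then show ?thesis
    by (rule finite_subset) (simp add: finite_lists_length_eq finite_tree_vertices)
qed

lemma path_prob_nonneg: "path_prob m n vs \<ge> 0"
  by (induction m n vs rule: path_prob.induct) (auto simp: srw_def)

definition first_hit_at :: "(nat \<Rightarrow> nat) \<Rightarrow> nat \<Rightarrow> nat list set \<Rightarrow> nat list \<Rightarrow> nat list \<Rightarrow> nat \<Rightarrow> real"
  where "first_hit_at m n A x y t = (\<Sum>vs\<in>hit_paths m n A x y (Suc t). path_prob m n vs)"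

lemma first_hit_prob_eq_suminf: "first_hit_prob m n A x y = (\<Sum>t. first_hit_at m n A x y t)"
  by (simp add: first_hit_prob_def first_hit_at_def)

lemma first_hit_at_nonneg: "first_hit_at m n A x y t \<ge> 0"
  by (simp add: first_hit_at_def sum_nonneg path_prob_nonneg)

lemma hit_paths_one:
  "hit_paths m n A x y (Suc 0) = (if tree_vertex m n x \<and> tree_vertex m n y then {[x, y]} else {})"
proof -
  have "vs \<in> hit_paths m n A x y (Suc 0) \<longleftrightarrow>
      vs = [x, y] \<and> tree_vertex m n x \<and> tree_vertex m n y" for vs
  proof
    assume vs: "vs \<in> hit_paths m n A x y (Suc 0)"
    then obtain a b where "vs = [a, b]"
      by (auto simp: hit_paths_def numeral_2_eq_2 length_Suc_conv)
    with vs show "vs = [x, y] \<and> tree_vertex m n x \<and> tree_vertex m n y"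
      by (auto simp: hit_paths_def less_Suc_eq)
  qed (auto simp: hit_paths_def less_Suc_eq)
  then show ?thesis by auto
qed

lemma first_hit_at_0: "tree_vertex m n x \<Longrightarrow> first_hit_at m n A x y 0 = srw m n x y"
  using tree_vertex_nbrs[of m n x y]
  by (auto simp: first_hit_at_def hit_paths_one srw_def)

lemma hit_paths_Suc_Suc:
  assumes x: "tree_vertex m n x"
  shows "hit_paths m n A x y (Suc (Suc t)) =
    (\<lambda>(z, ws). x # ws) ` (SIGMA z:{z. tree_vertex m n z \<and> z \<notin> A}. hit_paths m n A z y (Suc t))"
    (is "?lhs = ?rhs")
proof (intro set_eqI iffI)
  fix vs assume "vs \<in> ?lhs"
  then obtain z ws where vs: "vs = x # z # ws" and "length ws = Suc t" and "last (z # ws) = y"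
      and "\<forall>i<Suc (Suc (Suc t)). tree_vertex m n (vs ! i)"
      and "\<forall>i. 0 < i \<and> i < Suc (Suc t) \<longrightarrow> vs ! i \<notin> A"
    by (auto simp: hit_paths_def length_Suc_conv)
  then have "z # ws \<in> hit_paths m n A z y (Suc t)" and "tree_vertex m n z" and "z \<notin> A"
    by (force simp: hit_paths_def)+
  with vs show "vs \<in> ?rhs" by force
next
  fix vs assume "vs \<in> ?rhs"
  then obtain z ws where vs: "vs = x # z # ws" and z: "tree_vertex m n z" "z \<notin> A"
      and ws: "z # ws \<in> hit_paths m n A z y (Suc t)"
    by (auto simp: hit_paths_def length_Suc_conv)
  have "tree_vertex m n (vs ! i)" if "i < length vs" for i
    using that x ws by (cases i) (auto simp: vs hit_paths_def)
  moreover have "vs ! i \<notin> A" if "0 < i" "i < Suc (Suc t)" for i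
    using that z ws by (cases i) (auto simp: vs hit_paths_def nth_Cons split: nat.splits)
  ultimately show "vs \<in> ?lhs"
    using ws by (simp add: hit_paths_def vs)
qed

lemma first_hit_at_Suc:
  assumes x: "tree_vertex m n x"
  shows "first_hit_at m n A x y (Suc t) =
    (\<Sum>z\<in>nbrs m n x - A. srw m n x z * first_hit_at m n A z y t)"
proof -
  let ?Z = "{z. tree_vertex m n z \<and> z \<notin> A}"
  have finZ: "finite ?Z"
    by (rule finite_subset[OF _ finite_tree_vertices]) auto
  have inj: "inj_on (\<lambda>(z, ws). x # ws) (SIGMA z:?Z. hit_paths m n A z y (Suc t))"
    by (auto simp: inj_on_def hit_paths_def)
  have path_prob_Cons: "path_prob m n (x # ws) = srw m n x z * path_prob m n ws"
    if "ws \<in> hit_paths m n A z y (Suc t)" for z ws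
    using that by (cases ws) (auto simp: hit_paths_def)
  have "first_hit_at m n A x y (Suc t) =
      (\<Sum>z\<in>?Z. \<Sum>ws\<in>hit_paths m n A z y (Suc t). path_prob m n (x # ws))"
    unfolding first_hit_at_def hit_paths_Suc_Suc[OF x] sum.reindex[OF inj]
    by (simp add: sum.Sigma[OF finZ] finite_hit_paths case_prod_beta)
  also have "\<dots> = (\<Sum>z\<in>?Z. srw m n x z * first_hit_at m n A z y t)"
    by (simp add: path_prob_Cons first_hit_at_def sum_distrib_left cong: sum.cong)
  also have "\<dots> = (\<Sum>z\<in>nbrs m n x - A. srw m n x z * first_hit_at m n A z y t)"
    by (rule sum.mono_neutral_right[OF finZ]) (auto simp: tree_vertex_nbrs[OF x] srw_def)
  finally show ?thesis .
qed

lemma srw_add_sum_srw_le_1: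
  assumes "y \<in> A"
  shows "srw m n x y + (\<Sum>z\<in>nbrs m n x - A. srw m n x z) \<le> 1"
proof -
  have "srw m n x y + (\<Sum>z\<in>nbrs m n x - A. srw m n x z) =
      (\<Sum>z\<in>insert y (nbrs m n x - A). srw m n x z)"
    using assms by (simp add: finite_nbrs)
  also have "\<dots> \<le> (\<Sum>z\<in>insert y (nbrs m n x). srw m n x z)"
    by (rule sum_mono2) (auto simp: finite_nbrs srw_def)
  also have "\<dots> = (\<Sum>z\<in>nbrs m n x. srw m n x z)"
    by (cases "y \<in> nbrs m n x") (simp_all add: finite_nbrs srw_def insert_absorb)
  also have "\<dots> \<le> 1"
    by (simp add: srw_def)
  finally show ?thesis .
qed

lemma sum_first_hit_at_le_1:
  assumes "y \<in> A"
  shows "tree_vertex m n x \<Longrightarrow> (\<Sum>t<N. first_hit_at m n A x y t) \<le> 1"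
proof (induction N arbitrary: x)
  case (Suc N)
  let ?f = "first_hit_at m n A"
  have "(\<Sum>t<Suc N. ?f x y t) = srw m n x y + (\<Sum>z\<in>nbrs m n x - A. srw m n x z * (\<Sum>t<N. ?f z y t))"
    using Suc.prems unfolding sum.lessThan_Suc_shift
    by (simp add: first_hit_at_0 first_hit_at_Suc sum_distrib_left
        sum.swap[of _ "{..<N}"])
  also have "\<dots> \<le> srw m n x y + (\<Sum>z\<in>nbrs m n x - A. srw m n x z)"
    using Suc.IH tree_vertex_nbrs[OF Suc.prems]
    by (intro add_left_mono sum_mono mult_left_le) (auto simp: srw_def)
  also have "\<dots> \<le> 1"
    by (rule srw_add_sum_srw_le_1[OF assms])
  finally show ?case .
qed simp

lemma summable_first_hit_at:
  "y \<in> A \<Longrightarrow> tree_vertex m n x \<Longrightarrow> summable (first_hit_at m n A x y)"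
  by (rule summableI_nonneg_bounded[OF first_hit_at_nonneg sum_first_hit_at_le_1])

lemma first_hit_prob_first_step:
  assumes "y \<in> A" "tree_vertex m n x"
  shows "first_hit_prob m n A x y =
    srw m n x y + (\<Sum>z\<in>nbrs m n x - A. srw m n x z * first_hit_prob m n A z y)"
proof -
  have summable: "summable (first_hit_at m n A z y)" if "z \<in> nbrs m n x" for z
    using assms tree_vertex_nbrs that by (blast intro: summable_first_hit_at)
  have "first_hit_prob m n A x y = first_hit_at m n A x y 0 + (\<Sum>t. first_hit_at m n A x y (Suc t))"
    by (simp add: first_hit_prob_eq_suminf suminf_split_head[OF summable_first_hit_at[OF assms]])
  also have "(\<Sum>t. first_hit_at m n A x y (Suc t)) =
      (\<Sum>z\<in>nbrs m n x - A. \<Sum>t. srw m n x z * first_hit_at m n A z y t)"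
    unfolding first_hit_at_Suc[OF assms(2)] by (rule suminf_sum) (simp add: summable summable_mult)
  finally show ?thesis
    using assms by (simp add: first_hit_at_0 first_hit_prob_eq_suminf suminf_mult summable)
qed

section \<open>Harmonic functions and the maximum principle\<close>

definition harmonic_at :: "(nat \<Rightarrow> nat) \<Rightarrow> nat \<Rightarrow> (nat list \<Rightarrow> real) \<Rightarrow> nat list \<Rightarrow> bool"
  where "harmonic_at m n h v \<longleftrightarrow> h v = (\<Sum>z\<in>nbrs m n v. srw m n v z * h z)"

lemma harmonic_at_diff:
  "harmonic_at m n f v \<Longrightarrow> harmonic_at m n g v \<Longrightarrow> harmonic_at m n (\<lambda>z. f z - g z) v"
  by (simp add: harmonic_at_def right_diff_distrib sum_subtractf)

lemma harmonic_at_nonroot_iff: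
  assumes "v \<noteq> []" "length v < n"
  shows "harmonic_at m n h v \<longleftrightarrow>
    h v = (h (butlast v) + (\<Sum>c<m (Suc (length v)). h (v @ [c]))) / (real (m (Suc (length v))) + 1)"
  using assms unfolding harmonic_at_def sum_nbrs_srw
  by (simp add: card_nbrs_nonroot card_image nbrs_nonroot butlast_not_in_children
      sum.reindex inj_on_def add.commute)

lemma harmonic_at_root_iff:
  "0 < n \<Longrightarrow> harmonic_at m n h [] \<longleftrightarrow> h [] = (\<Sum>c<m (Suc 0). h [c]) / real (m (Suc 0))"
  unfolding harmonic_at_def sum_nbrs_srw
  by (simp add: card_nbrs_root card_image nbrs_root sum.reindex inj_on_def)

text \<open>Since first_hit_prob only looks at times t \<ge> 1, on A itself it is a return probability;
  the boundary values are therefore imposed explicitly.\<close>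
definition hitting_value :: "(nat \<Rightarrow> nat) \<Rightarrow> nat \<Rightarrow> nat list set \<Rightarrow> nat list \<Rightarrow> nat list \<Rightarrow> real"
  where "hitting_value m n A y z = (if z \<in> A then of_bool (z = y) else first_hit_prob m n A z y)"

lemma first_hit_prob_eq_sum_hitting_value:
  assumes "y \<in> A" "tree_vertex m n x"
  shows "first_hit_prob m n A x y = (\<Sum>z\<in>nbrs m n x. srw m n x z * hitting_value m n A y z)"
proof -
  have split: "srw m n x z * hitting_value m n A y z =
      srw m n x z * of_bool (z = y) +
      (if z \<in> A then 0 else srw m n x z * first_hit_prob m n A z y)" for z
    using assms(1) by (auto simp: hitting_value_def)
  have "(\<Sum>z\<in>nbrs m n x. srw m n x z * of_bool (z = y)) = srw m n x y"
    by (simp add: srw_def of_bool_def sum_divide_distrib[symmetric] sum.delta finite_nbrs)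
  then show ?thesis
    using assms
    by (simp add: split sum.distrib first_hit_prob_first_step sum.If_cases finite_nbrs Diff_eq)
qed

lemma harmonic_at_hitting_value:
  "y \<in> A \<Longrightarrow> tree_vertex m n v \<Longrightarrow> v \<notin> A \<Longrightarrow> harmonic_at m n (hitting_value m n A y) v"
  by (simp add: harmonic_at_def hitting_value_def[of _ _ _ _ v] first_hit_prob_eq_sum_hitting_value)

lemma m_Suc_pos: "l < n \<Longrightarrow> \<forall>j\<in>{1..n}. m j \<ge> 1 \<Longrightarrow> 0 < (m :: nat \<Rightarrow> nat) (Suc l)"
  by (drule bspec[where x = "Suc l"]) auto

lemma mean_ge_bound_imp_eq:
  fixes f :: "'a \<Rightarrow> real"
  assumes "finite N" "z \<in> N" "\<forall>w\<in>N. f w \<le> M" "M \<le> sum f N / card N"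
  shows "f z = M"
proof -
  have "card N > 0"
    using assms(1,2) card_gt_0_iff by blast
  then have "(\<Sum>w\<in>N. M - f w) \<le> 0"
    using assms(4) by (simp add: sum_subtractf field_simps)
  moreover have "\<forall>w\<in>N. M - f w \<ge> 0"
    using assms(3) by simp
  ultimately have "(\<Sum>w\<in>N. M - f w) = 0"
    by (intro antisym sum_nonneg) auto
  then have "M - f z = 0"
    using sum_nonneg_eq_0_iff[OF assms(1), of "\<lambda>w. M - f w"] \<open>\<forall>w\<in>N. M - f w \<ge> 0\<close> assms(2)
    by simp
  then show ?thesis
    by simp
qed

text \<open>A vertex where |d| is maximal passes the maximum on to its first child (a mean of values
  bounded by the maximum attains it only if all of them do), and so on until the walk leaves S,
  where d vanishes.\<close>
lemma harmonic_vanishing_outside_eq_0: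
  assumes fin: "finite S" and m_pos: "\<forall>j\<in>{1..n}. m j \<ge> 1"
    and inner: "\<forall>v\<in>S. tree_vertex m n v \<and> length v < n"
    and harmonic: "\<forall>v\<in>S. harmonic_at m n d v"
    and outside: "\<forall>v\<in>S. \<forall>z\<in>nbrs m n v. z \<notin> S \<longrightarrow> d z = 0"
    and "v \<in> S"
  shows "d v = 0"
proof -
  define M where "M = Max ((\<lambda>v. \<bar>d v\<bar>) ` S)"
  have le_M: "\<bar>d z\<bar> \<le> M" if "z \<in> S" for z
    using fin that by (simp add: M_def)
  have "M \<in> (\<lambda>v. \<bar>d v\<bar>) ` S"
    unfolding M_def using fin \<open>v \<in> S\<close> by (intro Max_in) auto
  then obtain v0 where v0: "v0 \<in> S" "\<bar>d v0\<bar> = M"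
    by auto
  have "M = 0" if "v \<in> S" "\<bar>d v\<bar> = M" "n - length v = k" for v k
    using that
  proof (induction k arbitrary: v rule: less_induct)
    case (less k)
    let ?N = "nbrs m n v"
    have bounded: "\<forall>z\<in>?N. \<bar>d z\<bar> \<le> M"
    proof
      fix z assume "z \<in> ?N"
      then show "\<bar>d z\<bar> \<le> M"
        using outside less.prems(1) le_M v0 by (cases "z \<in> S") auto
    qed
    have "M = \<bar>sum d ?N\<bar> / card ?N"
      using harmonic less.prems by (simp add: harmonic_at_def sum_nbrs_srw)
    then have "M \<le> (\<Sum>z\<in>?N. \<bar>d z\<bar>) / card ?N"
      by (simp add: divide_right_mono sum_abs)
    moreover have child: "v @ [0] \<in> ?N"
    proof -
      have "length v < n" using inner less.prems by blast
      then have "m (Suc (length v)) > 0" using m_pos by (rule m_Suc_pos)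
      then show ?thesis using \<open>length v < n\<close> by (simp add: nbrs_def)
    qed
    ultimately have max_child: "\<bar>d (v @ [0])\<bar> = M"
      using mean_ge_bound_imp_eq[OF finite_nbrs child bounded] by simp
    show "M = 0"
    proof (cases "v @ [0] \<in> S")
      case True
      moreover have "n - length (v @ [0]) < k"
        using inner less.prems by auto
      ultimately show ?thesis
        using less.IH max_child by blast
    next
      case False
      then show ?thesis
        using outside less.prems(1) child max_child by auto
    qed
  qed
  then show ?thesis
    using v0 le_M \<open>v \<in> S\<close> by fastforce
qed

lemma hitting_value_eq_harmonic:
  assumes fin: "finite S" and m_pos: "\<forall>j\<in>{1..n}. m j \<ge> 1" and "y \<in> A"
    and inner: "\<forall>v\<in>S. tree_vertex m n v \<and> length v < n \<and> v \<notin> A"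
    and closed: "\<forall>v\<in>S. nbrs m n v \<subseteq> S \<union> A"
    and harmonic: "\<forall>v\<in>S. harmonic_at m n g v"
    and boundary: "\<forall>z\<in>A. g z = of_bool (z = y)"
    and "v \<in> S"
  shows "hitting_value m n A y v = g v"
proof -
  let ?d = "\<lambda>z. hitting_value m n A y z - g z"
  have "?d v = 0"
  proof (rule harmonic_vanishing_outside_eq_0[OF fin m_pos _ _ _ \<open>v \<in> S\<close>])
    show "\<forall>v\<in>S. tree_vertex m n v \<and> length v < n"
      using inner by blast
    show "\<forall>v\<in>S. harmonic_at m n ?d v"
      using inner harmonic \<open>y \<in> A\<close> by (blast intro: harmonic_at_diff harmonic_at_hitting_value)
    show "\<forall>v\<in>S. \<forall>z\<in>nbrs m n v. z \<notin> S \<longrightarrow> ?d z = 0"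
      using closed boundary by (fastforce simp: hitting_value_def)
  qed
  then show ?thesis
    by simp
qed

section \<open>Climbing probabilities\<close>

text \<open>climb m n K is the probability that the walk from a vertex at height K (level n - K) reaches
  its parent before L_n. With c = m (n - K + 1) children, first-step analysis gives
  a_K = (1 + c a_(K-1) a_K) / (c + 1), solved for a_K below; the root (K = n) has no parent.\<close>
fun climb :: "(nat \<Rightarrow> nat) \<Rightarrow> nat \<Rightarrow> nat \<Rightarrow> real" where
  "climb m n 0 = 0"
| "climb m n (Suc K) =
    (if Suc K = n then 0 else 1 / (real (m (n - K)) + 1 - real (m (n - K)) * climb m n K))"

lemma climb_self [simp]: "climb m n n = 0"
  by (cases n) simp_all

lemma climb_le_1: "climb m n K \<le> 1"
proof (induction K)
  case (Suc K)
  then have "1 \<le> real (m (n - K)) + 1 - real (m (n - K)) * climb m n K"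
    by (simp add: mult_left_le)
  then show ?case
    by simp
qed simp

lemma climb_recurrence:
  assumes "1 \<le> K" "K < n"
  shows "climb m n K * (real (m (n - K + 1)) + 1 - real (m (n - K + 1)) * climb m n (K - 1)) = 1"
proof -
  obtain K' where K: "K = Suc K'"
    using assms by (cases K) auto
  have "real (m (n - K')) * climb m n K' \<le> real (m (n - K'))"
    by (simp add: mult_left_le climb_le_1)
  then have "real (m (n - K')) + 1 - real (m (n - K')) * climb m n K' \<noteq> 0"
    by linarith
  moreover have "n - K + 1 = n - K'"
    using assms K by simp
  ultimately show ?thesis
    using assms K by simp
qed

text \<open>A vertex with value h = a b + (1 - a) r, whose parent has value b and whose c children have
  value a' h + (1 - a') r: the climbing recursion makes h the mean over its c + 1 neighbours.\<close>
lemma first_step_identity: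
  fixes a a' c h b r :: real
  assumes "a * (c + 1 - c * a') = 1" "c + 1 \<noteq> 0" "h = a * b + (1 - a) * r"
  shows "h = (b + c * (a' * h + (1 - a') * r)) / (c + 1)"
proof -
  have "h * (c + 1 - c * a') =
      b * (a * (c + 1 - c * a')) + r * (c + 1 - c * a') - r * (a * (c + 1 - c * a'))"
    by (simp add: assms(3) algebra_simps)
  then have "h * (c + 1 - c * a') = b + r * (c + 1 - c * a') - r"
    using assms(1) by simp
  then have "h * (c + 1) = b + c * (a' * h + (1 - a') * r)"
    by (simp add: algebra_simps)
  then show ?thesis
    using assms(2) by (simp add: field_simps)
qed

text \<open>The probability that the walk from w reaches its ancestor at height H before L_n.\<close>
definition climb_to :: "(nat \<Rightarrow> nat) \<Rightarrow> nat \<Rightarrow> nat \<Rightarrow> nat list \<Rightarrow> real"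
  where "climb_to m n H w = (\<Prod>k\<in>{n - length w..<H}. climb m n k)"

lemma climb_to_leaf: "length w = n \<Longrightarrow> 0 < H \<Longrightarrow> climb_to m n H w = 0"
  by (simp add: climb_to_def prod.atLeast_Suc_lessThan)

lemma climb_to_butlast:
  assumes "v \<noteq> []" "length v \<le> n" "n - length v < H"
  shows "climb_to m n H v = climb m n (n - length v) * climb_to m n H (butlast v)"
proof -
  have "n - length (butlast v) = Suc (n - length v)"
    using assms by (cases v rule: rev_cases) auto
  then show ?thesis
    using assms by (simp add: climb_to_def prod.atLeast_Suc_lessThan)
qed

lemma harmonic_at_climb_to:
  assumes "n - H < length v" "length v < n"
  shows "harmonic_at m n (climb_to m n H) v"
proof -
  define K where "K = n - length v"
  define c where "c = real (m (Suc (length v)))"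
  define P where "P = climb_to m n H (butlast v)"
  have K: "1 \<le> K" "K < n" "K < H"
    using assms by (auto simp: K_def)
  have v: "v \<noteq> []"
    using assms by auto
  have at_v: "climb_to m n H v = climb m n K * P"
    using assms K v by (simp add: climb_to_butlast P_def K_def)
  have at_child: "climb_to m n H (v @ [i]) = climb m n (K - 1) * climb_to m n H v" for i
    using climb_to_butlast[of "v @ [i]" n H m] assms K by (simp add: K_def Suc_diff_Suc)
  have "climb m n K * (c + 1 - c * climb m n (K - 1)) = 1"
    using climb_recurrence[OF K(1,2)] assms by (simp add: c_def K_def Suc_diff_le)
  then have "climb_to m n H v = (P + c * (climb m n (K - 1) * climb_to m n H v)) / (c + 1)"
    using first_step_identity[where r = 0 and b = P] at_v by (simp add: c_def)
  then show ?thesis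
    using assms v by (simp add: harmonic_at_nonroot_iff at_child P_def c_def)
qed

definition inner_descendants :: "(nat \<Rightarrow> nat) \<Rightarrow> nat \<Rightarrow> nat list \<Rightarrow> nat list set"
  where "inner_descendants m n u =
    {v. tree_vertex m n v \<and> length u < length v \<and> length v < n \<and> take (length u) v = u}"

lemma finite_inner_descendants: "finite (inner_descendants m n u)"
  by (rule finite_subset[OF _ finite_tree_vertices]) (auto simp: inner_descendants_def)

lemma nbrs_inner_descendant:
  assumes "v \<in> inner_descendants m n u" "z \<in> nbrs m n v"
  shows "z \<in> inner_descendants m n u \<or> z = u \<or> leaf m n z"
proof -
  have v: "tree_vertex m n v" "length u < length v" "length v < n" "take (length u) v = u"
    using assms(1) by (auto simp: inner_descendants_def)
  then have "v \<noteq> []"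
    by auto
  then have z: "tree_vertex m n z" "z = butlast v \<or> (\<exists>c. z = v @ [c])"
    using assms(2) v tree_vertex_nbrs by (auto simp: nbrs_nonroot)
  show ?thesis
  proof (cases "z = butlast v")
    case True
    then show ?thesis
      using v z by (cases "length v = Suc (length u)")
        (auto simp: inner_descendants_def butlast_conv_take take_butlast)
  next
    case False
    then show ?thesis
      using v z by (auto simp: inner_descendants_def leaf_def tree_vertex_def)
  qed
qed

lemma alpha_eq_climb:
  assumes m_pos: "\<forall>j\<in>{1..n}. m j \<ge> 1" and j: "1 \<le> j" "j < n"
  shows "alpha m n j = climb m n j"
proof -
  let ?u = "xi n (Suc j)"
  let ?A = "{v. leaf m n v} \<union> {?u}"
  let ?S = "inner_descendants m n ?u"
  have u: "length ?u = n - Suc j" "\<not> leaf m n ?u"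
    using j by (auto simp: xi_def leaf_def)
  have "xi n j \<notin> ?A"
    using j by (auto simp: xi_def leaf_def)
  then have "alpha m n j = hitting_value m n ?A ?u (xi n j)"
    using j by (simp add: alpha_def hitting_value_def)
  also have "\<dots> = climb_to m n (Suc j) (xi n j)"
  proof (rule hitting_value_eq_harmonic[OF finite_inner_descendants m_pos])
    show "\<forall>v\<in>?S. tree_vertex m n v \<and> length v < n \<and> v \<notin> ?A"
      by (auto simp: inner_descendants_def leaf_def)
    show "\<forall>v\<in>?S. nbrs m n v \<subseteq> ?S \<union> ?A"
      using nbrs_inner_descendant by blast
    show "\<forall>v\<in>?S. harmonic_at m n (climb_to m n (Suc j)) v"
      using u by (auto simp: inner_descendants_def intro!: harmonic_at_climb_to)
    show "\<forall>z\<in>?A. climb_to m n (Suc j) z = of_bool (z = ?u)"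
    proof
      fix z assume "z \<in> ?A"
      then consider "leaf m n z" | "z = ?u"
        by blast
      then show "climb_to m n (Suc j) z = of_bool (z = ?u)"
      proof cases
        case 1
        with u show ?thesis
          by (auto simp: leaf_def climb_to_leaf)
      next
        case 2
        with u j show ?thesis
          by (simp add: climb_to_def)
      qed
    qed
    have "0 < m (Suc i)" if "i < n - j" for i
      using that m_pos by (intro m_Suc_pos) auto
    then show "xi n j \<in> ?S"
      using j by (simp add: inner_descendants_def xi_def tree_vertex_def)
  qed simp
  also have "\<dots> = climb m n j"
    using j by (simp add: climb_to_def xi_def)
  finally show ?thesis .
qed

section \<open>The leaf-hitting kernel\<close>

text \<open>Summand r: the walk from v climbs exactly to its ancestor at level r and then lands uniformly
  on one of the leaves below that ancestor.\<close>
definition hit_leaf_prob :: "(nat \<Rightarrow> nat) \<Rightarrow> nat \<Rightarrow> nat list \<Rightarrow> nat list \<Rightarrow> real"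
  where "hit_leaf_prob m n y v =
    (\<Sum>r\<le>length v. climb_to m n (n - r) v * (1 - climb m n (n - r)) *
       of_bool (take r v = take r y) / (\<Prod>j\<in>{Suc r..n}. real (m j)))"

lemma hit_leaf_prob_root: "hit_leaf_prob m n y [] = 1 / (\<Prod>j\<in>{1..n}. real (m j))"
  by (simp add: hit_leaf_prob_def climb_to_def)

lemma hit_leaf_prob_butlast:
  assumes "v \<noteq> []" "length v \<le> n"
  shows "hit_leaf_prob m n y v =
    climb m n (n - length v) * hit_leaf_prob m n y (butlast v) +
    (1 - climb m n (n - length v)) * of_bool (take (length v) y = v) /
      (\<Prod>j\<in>{Suc (length v)..n}. real (m j))"
proof -
  obtain l where l: "length v = Suc l"
    using assms by (cases v) auto
  define t where "t u r = climb_to m n (n - r) u * (1 - climb m n (n - r)) *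
    of_bool (take r u = take r y) / (\<Prod>j\<in>{Suc r..n}. real (m j))" for u r
  have "t v r = climb m n (n - length v) * t (butlast v) r" if "r \<le> l" for r
    using that assms l by (simp add: t_def climb_to_butlast take_butlast)
  then have "(\<Sum>r\<le>l. t v r) = climb m n (n - length v) * hit_leaf_prob m n y (butlast v)"
    using l by (simp add: hit_leaf_prob_def t_def[symmetric] sum_distrib_left)
  moreover have "t v (length v) = (1 - climb m n (n - length v)) * of_bool (take (length v) y = v) /
      (\<Prod>j\<in>{Suc (length v)..n}. real (m j))"
    by (simp add: t_def climb_to_def)
  ultimately show ?thesis
    using l by (simp add: hit_leaf_prob_def t_def[symmetric])
qed

lemma hit_leaf_prob_leaf:
  "length w = n \<Longrightarrow> length y = n \<Longrightarrow> w \<noteq> [] \<Longrightarrow> hit_leaf_prob m n y w = of_bool (w = y)"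
  by (auto simp: hit_leaf_prob_butlast)

lemma sum_of_bool_take_Suc:
  fixes y v :: "nat list"
  assumes "l < length y" "y ! l < M"
  shows "(\<Sum>i<M. of_bool (take (Suc l) y = v @ [i]) :: real) = of_bool (take l y = v)"
proof -
  have "take (Suc l) y = v @ [i] \<longleftrightarrow> take l y = v \<and> i = y ! l" for i
    using assms by (auto simp: take_Suc_conv_app_nth)
  then show ?thesis
    using assms by (simp add: of_bool_conj sum_distrib_left[symmetric] of_bool_def)
qed

lemma sum_hit_leaf_prob_children:
  assumes y: "leaf m n y" and v: "length v < n"
  defines "c \<equiv> real (m (Suc (length v)))" and "a \<equiv> climb m n (n - Suc (length v))"
    and "r \<equiv> of_bool (take (length v) y = v) / (\<Prod>j\<in>{Suc (length v)..n}. real (m j))"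
  shows "(\<Sum>i<m (Suc (length v)). hit_leaf_prob m n y (v @ [i])) =
    c * (a * hit_leaf_prob m n y v + (1 - a) * r)"
proof -
  let ?U = "\<Prod>j\<in>{Suc (Suc (length v))..n}. real (m j)"
  have y_len: "length y = n" "y ! length v < m (Suc (length v))"
    using y v by (auto simp: leaf_def tree_vertex_def)
  then have "c > 0"
    by (simp add: c_def)
  have U: "(\<Prod>j\<in>{Suc (length v)..n}. real (m j)) = c * ?U"
    using v by (simp add: c_def prod.atLeast_Suc_atMost)
  have "hit_leaf_prob m n y (v @ [i]) =
      a * hit_leaf_prob m n y v + (1 - a) / ?U * of_bool (take (Suc (length v)) y = v @ [i])" for i
    using v by (simp add: hit_leaf_prob_butlast a_def)
  then have "(\<Sum>i<m (Suc (length v)). hit_leaf_prob m n y (v @ [i])) =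
      c * a * hit_leaf_prob m n y v +
      (1 - a) / ?U * (\<Sum>i<m (Suc (length v)). of_bool (take (Suc (length v)) y = v @ [i]))"
    by (simp add: sum.distrib sum_distrib_left c_def del: sum_of_bool_eq)
  also have "\<dots> = c * a * hit_leaf_prob m n y v + (1 - a) / ?U * of_bool (take (length v) y = v)"
    using y_len v by (simp add: sum_of_bool_take_Suc del: sum_of_bool_eq)
  also have "\<dots> = c * (a * hit_leaf_prob m n y v + (1 - a) * r)"
  proof -
    have "c * r = of_bool (take (length v) y = v) / ?U"
      using \<open>c > 0\<close> by (simp add: r_def U)
    moreover have "c * (a * hit_leaf_prob m n y v + (1 - a) * r) =
        c * a * hit_leaf_prob m n y v + (1 - a) * (c * r)"
      by (simp add: algebra_simps)
    ultimately show ?thesis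
      by simp
  qed
  finally show ?thesis .
qed

lemma harmonic_at_hit_leaf_prob:
  assumes y: "leaf m n y" and v: "length v < n"
  shows "harmonic_at m n (hit_leaf_prob m n y) v"
proof -
  define c where "c = real (m (Suc (length v)))"
  define a where "a = climb m n (n - Suc (length v))"
  define r where "r = of_bool (take (length v) y = v) / (\<Prod>j\<in>{Suc (length v)..n}. real (m j))"
  have children: "(\<Sum>i<m (Suc (length v)). hit_leaf_prob m n y (v @ [i])) =
      c * (a * hit_leaf_prob m n y v + (1 - a) * r)"
    unfolding c_def a_def r_def by (rule sum_hit_leaf_prob_children[OF y v])
  show ?thesis
  proof (cases "v = []")
    case True
    have "c > 0"
      using y v True by (auto simp: c_def leaf_def tree_vertex_def)
    moreover have "hit_leaf_prob m n y v = r"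
      using True by (simp add: r_def hit_leaf_prob_root)
    ultimately show ?thesis
      using v True children by (simp add: harmonic_at_root_iff c_def algebra_simps)
  next
    case False
    have "climb m n (n - length v) * (c + 1 - c * a) = 1"
      using climb_recurrence[of "n - length v" n m] v False
      by (simp add: a_def c_def Suc_diff_le diff_Suc)
    then have "hit_leaf_prob m n y v =
        (hit_leaf_prob m n y (butlast v) + c * (a * hit_leaf_prob m n y v + (1 - a) * r)) / (c + 1)"
      using False v by (intro first_step_identity) (simp_all add: hit_leaf_prob_butlast r_def c_def)
    then show ?thesis
      using False v children by (simp add: harmonic_at_nonroot_iff c_def)
  qed
qed

lemma pbar_eq_hit_leaf_prob:
  assumes m_pos: "\<forall>j\<in>{1..n}. m j \<ge> 1" and x: "leaf m n x" and y: "leaf m n y" and "0 < n"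
  shows "pbar m n x y = hit_leaf_prob m n y (butlast x)"
proof -
  let ?L = "{v. leaf m n v}"
  let ?S = "{v. tree_vertex m n v \<and> length v < n}"
  have x_parent: "x \<noteq> []" "butlast x \<in> ?S"
    using x \<open>0 < n\<close> by (auto simp: leaf_def tree_vertex_def nth_butlast)
  have "pbar m n x y = hitting_value m n ?L y (butlast x)"
    using x y x_parent
    by (simp add: pbar_def first_hit_prob_eq_sum_hitting_value nbrs_leaf srw_def leaf_def)
  also have "\<dots> = hit_leaf_prob m n y (butlast x)"
  proof (rule hitting_value_eq_harmonic[OF _ m_pos])
    show "finite ?S"
      by (rule finite_subset[OF _ finite_tree_vertices]) auto
    show "\<forall>v\<in>?S. nbrs m n v \<subseteq> ?S \<union> ?L"
    proof (intro ballI subsetI)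
      fix v z assume "v \<in> ?S" "z \<in> nbrs m n v"
      then have "tree_vertex m n z"
        by (auto intro: tree_vertex_nbrs)
      then show "z \<in> ?S \<union> ?L"
        by (auto simp: leaf_def tree_vertex_def)
    qed
    show "\<forall>v\<in>?S. harmonic_at m n (hit_leaf_prob m n y) v"
      using y by (blast intro: harmonic_at_hit_leaf_prob)
    show "\<forall>z\<in>?L. hit_leaf_prob m n y z = of_bool (z = y)"
    proof
      fix z assume "z \<in> ?L"
      then have "length z = n" "z \<noteq> []"
        using \<open>0 < n\<close> by (auto simp: leaf_def)
      then show "hit_leaf_prob m n y z = of_bool (z = y)"
        using y by (simp add: hit_leaf_prob_leaf leaf_def)
    qed
    show "\<forall>v\<in>?S. tree_vertex m n v \<and> length v < n \<and> v \<notin> ?L"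
      by (simp add: leaf_def)
  qed (use y x_parent in simp_all)
  finally show ?thesis .
qed

lemma p0_eq_climb:
  assumes alpha: "\<forall>k\<in>{1..n}. alpha m n k = climb m n k" and "1 \<le> i" "i \<le> n"
  shows "p0 m n i = (\<Prod>k\<in>{1..<Suc n - i}. climb m n k) * (1 - climb m n (Suc n - i))"
proof -
  have "(\<Prod>k\<in>{1..<Suc n - i}. alpha m n k) = (\<Prod>k\<in>{1..<Suc n - i}. climb m n k)"
    using alpha assms by (intro prod.cong) auto
  moreover have "alpha m n (Suc n - i) = climb m n (Suc n - i)"
    using assms by (intro alpha[rule_format]) auto
  moreover have "{1..n - i} = {1..<Suc n - i}" "n - i + 1 = Suc n - i"
    using assms by auto
  ultimately show ?thesis
    using assms by (simp add: p0_def)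
qed

lemma prod_nth_eq_indicator:
  fixes x y :: "nat list"
  shows "r \<le> length x \<Longrightarrow> r \<le> length y \<Longrightarrow>
    (\<Prod>j\<in>{1..<Suc r}. if x ! (j - 1) = y ! (j - 1) then 1 else 0 :: real) =
      of_bool (take r x = take r y)"
proof (induction r)
  case (Suc r)
  then have "take (Suc r) x = take (Suc r) y \<longleftrightarrow> take r x = take r y \<and> x ! r = y ! r"
    by (simp add: take_Suc_conv_app_nth)
  with Suc show ?case
    by (simp add: prod.atLeastLessThan_Suc)
qed simp

lemma pnest_eq_hit_leaf_prob:
  assumes alpha: "\<forall>k\<in>{1..n}. alpha m n k = climb m n k" and "length x = n" "length y = n" "0 < n"
  shows "pnest m n x y = hit_leaf_prob m n y (butlast x)"
proof -
  obtain n' where n: "n = Suc n'"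
    using \<open>0 < n\<close> by (cases n) auto
  have "p0 m n (Suc r) * (\<Prod>j\<in>{1..<Suc r}. if x ! (j - 1) = y ! (j - 1) then 1 else 0) =
      climb_to m n (n - r) (butlast x) * (1 - climb m n (n - r)) *
        of_bool (take r (butlast x) = take r y)"
    if "r \<le> n'" for r
  proof -
    have "p0 m n (Suc r) = (\<Prod>k\<in>{1..<n - r}. climb m n k) * (1 - climb m n (n - r))"
      using p0_eq_climb[OF alpha, of "Suc r"] that n by simp
    moreover have "climb_to m n (n - r) (butlast x) = (\<Prod>k\<in>{1..<n - r}. climb m n k)"
      using assms n by (simp add: climb_to_def)
    moreover have "take r (butlast x) = take r x"
      using that assms n by (simp add: take_butlast)
    moreover have "(\<Prod>j\<in>{1..<Suc r}. if x ! (j - 1) = y ! (j - 1) then 1 else 0 :: real) =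
        of_bool (take r x = take r y)"
      using that assms n by (intro prod_nth_eq_indicator) auto
    ultimately show ?thesis
      using n by simp
  qed
  then have "(\<Sum>r\<le>n'. p0 m n (Suc r) *
      (\<Prod>j\<in>{1..<Suc r}. if x ! (j - 1) = y ! (j - 1) then 1 else 0) / (\<Prod>j\<in>{Suc r..n}. real (m j))) =
      hit_leaf_prob m n y (butlast x)"
    using assms n by (simp add: hit_leaf_prob_def)
  moreover have "{1..n} = Suc ` {..n'}"
    using n by (simp add: atLeast0AtMost[symmetric] image_Suc_atLeastAtMost)
  ultimately show ?thesis
    by (simp add: pnest_def sum.reindex)
qed

theorem proposition6p4:
  fixes m :: "nat \<Rightarrow> nat" and n :: nat
  assumes "n \<ge> 2"
    and "\<forall>j\<in>{1..n}. m j \<ge> 1"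
    and "leaf m n x" and "leaf m n y"
  shows "pnest m n x y = pbar m n x y"
proof -
  have "alpha m n k = climb m n k" if "k \<in> {1..n}" for k
    using that alpha_eq_climb[OF assms(2)] by (cases "k = n") (auto simp: alpha_def)
  then have "pnest m n x y = hit_leaf_prob m n y (butlast x)"
    using assms by (intro pnest_eq_hit_leaf_prob) (auto simp: leaf_def)
  also have "\<dots> = pbar m n x y"
    using assms by (intro pbar_eq_hit_leaf_prob[symmetric]) auto
  finally show ?thesis .
qed

end
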